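(* Let $N\ge1$, $\frac{(N-2)_+}{N}<m<1$, $q=m+\frac2N$. There exists $A_{sub}>0$ depending only on $N$ and $m$ such that: (i) if $m\in[\frac{N-1}{N},1)$, then for every $A\ge A_{sub}$ the function $w_A(s,y):=\sigma_A(y)$ satisfies $\partial_s w_A-\mathcal{L}w_A\le0$ in $(0,\infty)\times\mathbb{R}^N$; (ii) if $m\in(\frac{(N-2)_+}{N},\frac{N-1}{N})$, then for every $A\ge A_{sub}$ the function $$w_A(s,y):=\sigma_A(y)\Big(1-\frac{\gamma}{s}\Big),\qquad \gamma:=\frac{1}{2(1-m)},$$ satisfies $\partial_s w_A-\mathcal{L}w_A\le0$ in $(s_0,\infty)\times\mathbb{R}^N$, where $s_0:=\max\{\frac{4q}{1-m},\frac{2^{m+2}q}{q-1}\}$.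
   Context: $\sigma_A(y):=(A+B_0|y|^2)^{1/(m-1)}$ for $A>0$, with $B_0:=\frac{1-m}{2m(mN-N+2)}$. The nonlinear operator $\mathcal{L}$ acts on positive functions $z(s,y)$ by $$\mathcal{L}z:=\Delta z^m+\frac{1}{N(q-1)}(Nz+y\cdot\nabla z)+\frac{1}{(q-1)s}\Big(z+\frac{1-m}{2}y\cdot\nabla z\Big)-\frac{z^q}{s},$$ with $q=m+2/N$. *)

theory Defs
  imports "HOL-Analysis.Analysis"
begin

text \<open>Spatial dimension N is DIM('a) for the Euclidean space 'a (i.e. R^N).\<close>

definition qexp :: "real \<Rightarrow> real \<Rightarrow> real" where
  "qexp m N = m + 2 / N"

definition B0 :: "real \<Rightarrow> real \<Rightarrow> real" where
  "B0 m N = (1 - m) / (2 * m * (m * N - N + 2))"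

definition sigmaA :: "real \<Rightarrow> real \<Rightarrow> real \<Rightarrow> 'a::euclidean_space \<Rightarrow> real" where
  "sigmaA m N A y = (A + B0 m N * (norm y)\<^sup>2) powr (1 / (m - 1))"

definition pderiv_dir :: "('a::euclidean_space \<Rightarrow> real) \<Rightarrow> 'a \<Rightarrow> 'a \<Rightarrow> real" where
  "pderiv_dir f i y = deriv (\<lambda>t. f (y + t *\<^sub>R i)) 0"

definition laplacian :: "('a::euclidean_space \<Rightarrow> real) \<Rightarrow> 'a \<Rightarrow> real" where
  "laplacian f y = (\<Sum>i\<in>Basis. pderiv_dir (pderiv_dir f i) i y)"

definition y_grad :: "('a::euclidean_space \<Rightarrow> real) \<Rightarrow> 'a \<Rightarrow> real" where
  "y_grad f y = (\<Sum>i\<in>Basis. (y \<bullet> i) * pderiv_dir f i y)"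

definition Lop :: "real \<Rightarrow> (real \<Rightarrow> 'a::euclidean_space \<Rightarrow> real) \<Rightarrow> real \<Rightarrow> 'a \<Rightarrow> real" where
  "Lop m z s y =
     (let N = real DIM('a); q = qexp m N in
      laplacian (\<lambda>x. (z s x) powr m) y
      + 1 / (N * (q - 1)) * (N * z s y + y_grad (z s) y)
      + 1 / ((q - 1) * s) * (z s y + (1 - m) / 2 * y_grad (z s) y)
      - (z s y) powr q / s)"

definition dt :: "(real \<Rightarrow> 'a \<Rightarrow> real) \<Rightarrow> real \<Rightarrow> 'a \<Rightarrow> real" where
  "dt z s y = deriv (\<lambda>r. z r y) s"

end

theory Submission
  imports Defs
begin

(* Subsolutions built from the Barenblatt-type profile
     sigma_A(y) = (A + B0 |y|^2)^p,   p = 1/(m-1) < 0,   q = m + 2/N.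

   Write U = A + B0|y|^2, k = 1/(q-1), gamma = 1/(2(1-m)). For a function of separated
   variables w(s,y) = sigma_A(y) F(s) with F(s) > 0 a direct computation (using the choice
   of B0) gives

     L w = U^(p-1) (B0|y|^2 2 gamma (F^m - F) + A k (F/s - (F^m - F))) - U^(pq) F^q / s.

   Only s > 4q/(1-m) is used; the second
        entry of s0 in the statement is not needed.
   The theorem lemma3p1 combines both cases with the single threshold
     A_sub = max (max 1 (q-1)) (c^(1/e)),   e = (q-1)/(m-1) < 0,   c = min (5/16) (3/(8(q-1))). *)

section \<open>Derivatives of radial powers\<close>

lemma norm_sq_line_deriv:
  fixes y i :: "'a::euclidean_space"
  shows "((\<lambda>t. (norm (y + t *\<^sub>R i))\<^sup>2) has_real_derivative (2*(y \<bullet> i) + 2*t*(i \<bullet> i))) (at t)"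
proof -
  have "(\<lambda>t. (norm (y + t *\<^sub>R i))\<^sup>2) = (\<lambda>t. (norm y)\<^sup>2 + 2*t*(y \<bullet> i) + t\<^sup>2*(i \<bullet> i))"
    by (rule ext) (simp only: power2_norm_eq_inner,
                   simp add: inner_add_left inner_add_right inner_commute algebra_simps power2_eq_square)
  then show ?thesis
    by (auto intro!: derivative_eq_intros simp: algebra_simps)
qed

lemma radial_power_line_deriv:
  fixes y i :: "'a::euclidean_space"
  assumes "A > 0" "B \<ge> 0"
  shows "((\<lambda>t. (A + B*(norm (y + t *\<^sub>R i))\<^sup>2) powr e) has_real_derivative
            e * (A + B*(norm y)\<^sup>2) powr (e-1) * (2*B*(y \<bullet> i))) (at 0)"
proof -
  have pos: "A + B*(norm (y + 0 *\<^sub>R i))\<^sup>2 > 0"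
    using assms by (simp add: add_pos_nonneg)
  have "((\<lambda>t. A + B*(norm (y + t *\<^sub>R i))\<^sup>2) has_real_derivative (B*(2*(y \<bullet> i) + 2*0*(i \<bullet> i)))) (at 0)"
    using DERIV_add[OF DERIV_const DERIV_cmult[OF norm_sq_line_deriv], of A B y i 0] by simp
  from DERIV_fun_powr[OF this pos, of e] show ?thesis
    by (simp add: algebra_simps)
qed

lemma pderiv_radial_power:
  fixes y i :: "'a::euclidean_space"
  assumes "A > 0" "B \<ge> 0"
  shows "pderiv_dir (\<lambda>x. K * (A + B*(norm x)\<^sup>2) powr e) i y
       = K * (e * (A + B*(norm y)\<^sup>2) powr (e-1) * (2*B*(y \<bullet> i)))"
  unfolding pderiv_dir_def
  by (rule DERIV_imp_deriv) (rule DERIV_cmult[OF radial_power_line_deriv[OF assms]])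

text \<open>The first derivative of a radial power is a radial power times a coordinate; this is
  the product rule needed for its second derivative.\<close>
lemma pderiv_radial_power_coord:
  fixes y i :: "'a::euclidean_space"
  assumes "A > 0" "B \<ge> 0" "i \<in> Basis"
  shows "pderiv_dir (\<lambda>x. K * (A + B*(norm x)\<^sup>2) powr e * (x \<bullet> i)) i y
       = K * (e * (A + B*(norm y)\<^sup>2) powr (e-1) * (2*B*(y \<bullet> i)) * (y \<bullet> i) + (A + B*(norm y)\<^sup>2) powr e)"
  unfolding pderiv_dir_def
proof (rule DERIV_imp_deriv)
  have "(\<lambda>t. (y + t *\<^sub>R i) \<bullet> i) = (\<lambda>t. y \<bullet> i + t)"
    using assms(3) by (simp add: inner_add_left)
  then have coord: "((\<lambda>t. (y + t *\<^sub>R i) \<bullet> i) has_real_derivative 1) (at 0)"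
    by (auto intro!: derivative_eq_intros)
  note radial = radial_power_line_deriv[OF assms(1,2), where y=y and i=i and e=e]
  from DERIV_cmult[OF DERIV_mult[OF radial coord], of K]
  show "((\<lambda>t. K * (A + B*(norm (y + t *\<^sub>R i))\<^sup>2) powr e * ((y + t *\<^sub>R i) \<bullet> i)) has_real_derivative
     K * (e * (A + B*(norm y)\<^sup>2) powr (e-1) * (2*B*(y \<bullet> i)) * (y \<bullet> i) + (A + B*(norm y)\<^sup>2) powr e)) (at 0)"
    by (simp add: algebra_simps)
qed

lemma sum_Basis_inner_square:
  fixes y :: "'a::euclidean_space"
  shows "(\<Sum>i\<in>Basis. (y \<bullet> i) * (y \<bullet> i)) = (norm y)\<^sup>2"
  by (simp add: power2_norm_eq_inner euclidean_inner[of y y])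

lemma laplacian_radial_power:
  fixes y :: "'a::euclidean_space"
  assumes "A > 0" "B \<ge> 0"
  shows "laplacian (\<lambda>x. K * (A + B*(norm x)\<^sup>2) powr e) y
     = K*e*2*B*((e-1)*(A + B*(norm y)\<^sup>2) powr (e-1-1)*(2*B)*(norm y)\<^sup>2
                 + real DIM('a) * (A + B*(norm y)\<^sup>2) powr (e-1))"
proof -
  let ?V = "A + B*(norm y)\<^sup>2"
  have first: "pderiv_dir (\<lambda>x. K * (A + B*(norm x)\<^sup>2) powr e) i
             = (\<lambda>x. (K*e*2*B) * (A + B*(norm x)\<^sup>2) powr (e-1) * (x \<bullet> i))" for i :: 'a
    by (rule ext) (simp add: pderiv_radial_power[OF assms] algebra_simps)
  have second: "pderiv_dir (pderiv_dir (\<lambda>x. K * (A + B*(norm x)\<^sup>2) powr e) i) i y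
      = (K*e*2*B) * ((e-1) * ?V powr (e-1-1) * (2*B) * ((y \<bullet> i) * (y \<bullet> i)) + ?V powr (e-1))"
    if "i \<in> Basis" for i
    unfolding first pderiv_radial_power_coord[OF assms that] by (simp add: algebra_simps)
  have "laplacian (\<lambda>x. K * (A + B*(norm x)\<^sup>2) powr e) y
      = (\<Sum>i\<in>Basis. (K*e*2*B) * ((e-1) * ?V powr (e-1-1) * (2*B) * ((y \<bullet> i) * (y \<bullet> i)) + ?V powr (e-1)))"
    unfolding laplacian_def by (rule sum.cong) (simp_all add: second)
  also have "\<dots> = (K*e*2*B) * ((e-1) * ?V powr (e-1-1) * (2*B) * (\<Sum>i\<in>Basis. (y \<bullet> i) * (y \<bullet> i))
                                + real DIM('a) * ?V powr (e-1))"
    by (simp add: sum_distrib_left[symmetric] sum.distrib sum_distrib_right[symmetric] distrib_left)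
  finally show ?thesis
    by (simp add: sum_Basis_inner_square)
qed

lemma y_grad_radial_power:
  fixes y :: "'a::euclidean_space"
  assumes "A > 0" "B \<ge> 0"
  shows "y_grad (\<lambda>x. K * (A + B*(norm x)\<^sup>2) powr e) y
     = K*e*(A + B*(norm y)\<^sup>2) powr (e-1)*(2*B)*(norm y)\<^sup>2"
proof -
  have "y_grad (\<lambda>x. K * (A + B*(norm x)\<^sup>2) powr e) y
      = (\<Sum>i\<in>Basis. (K*e*(A + B*(norm y)\<^sup>2) powr (e-1)*(2*B)) * ((y \<bullet> i) * (y \<bullet> i)))"
    unfolding y_grad_def by (intro sum.cong) (auto simp: pderiv_radial_power[OF assms] algebra_simps)
  then show ?thesis
    by (simp add: sum_distrib_left[symmetric] sum_Basis_inner_square)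
qed

section \<open>The operator on functions of separated variables\<close>

lemma B0_pos:
  assumes "0 < m" "m < 1" "qexp m N > 1" "N > 0"
  shows "B0 m N > 0"
proof -
  have "m*N - N + 2 > 0"
    using assms(3,4) by (simp add: qexp_def field_simps)
  then show ?thesis
    unfolding B0_def using assms(1,2) by (simp add: divide_pos_pos)
qed

lemma sigmaA_scaled_powr:
  fixes x :: "'a::euclidean_space"
  assumes "A > 0" "B0 m N \<ge> 0" "f > 0"
  shows "(sigmaA m N A x * f) powr r = f powr r * (A + B0 m N * (norm x)\<^sup>2) powr (r/(m-1))"
  using assms by (simp add: sigmaA_def powr_mult powr_powr mult.commute)

text \<open>The ring identity behind the choice of \<open>B0\<close>: with \<open>D = mN - N + 2\<close>, \<open>B0 2mD = 1 - m\<close> and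
  \<open>N(q-1) = D\<close>, the terms of \<open>L w\<close> proportional to \<open>F\<close> and to \<open>|y|\<^sup>2\<close> collapse.
  Here \<open>a = U^(p-1)\<close>, \<open>t = 1/s\<close>, \<open>f = F\<close>, \<open>fm = F^m\<close>, \<open>fq = F^q\<close>, \<open>c = 1/(N(q-1))\<close>.\<close>
lemma Lop_separable_identity:
  fixes m N A r2 a f fm fq t Upq B p k g D U c h :: real
  assumes "D = m*N - N + 2" "B*(2*m*D) = 1-m" "p*(m-1) = 1" "c*D = 1" "k = c*N"
    "g*(2*(1-m)) = 1" "U = A + B*r2" "2*h = 1-m"
  shows "fm*(p+1)*2*B*(p*a*(2*B)*r2 + N*(a*U))
         + c*(N*(f*(a*U)) + f*p*a*(2*B)*r2)
         + k*t*(f*(a*U) + h*(f*p*a*(2*B)*r2))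
         - Upq*fq*t
       = a*(B*r2*(2*g*(fm-f)) + A*(k*f*t - k*(fm-f))) - Upq*fq*t"
  using assms by algebra

lemma separable_profile_terms:
  fixes m A :: real and y :: "'a::euclidean_space"
  defines "N \<equiv> real DIM('a)"
  defines "B \<equiv> B0 m N" and "p \<equiv> 1/(m-1)" and "U \<equiv> A + B0 m N * (norm y)\<^sup>2"
  assumes m: "m < 1" and A: "A > 0" and B: "B > 0" and f: "f > 0"
  shows "laplacian (\<lambda>x. (sigmaA m N A x * f) powr m) y
           = f powr m*(p+1)*2*B*(p*U powr (p-1)*(2*B)*(norm y)\<^sup>2 + N*U powr p)"
    and "y_grad (\<lambda>x. sigmaA m N A x * f) y = f*p*U powr (p-1)*(2*B)*(norm y)\<^sup>2"
    and "sigmaA m N A y * f = f * U powr p"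
    and "(sigmaA m N A y * f) powr q = U powr (p*q) * f powr q"
proof -
  have radial: "(sigmaA m N A x * f) powr r = f powr r * (A + B*(norm x)\<^sup>2) powr (r*p)" for x :: 'a and r
    using sigmaA_scaled_powr[OF A less_imp_le[OF B[unfolded B_def]] f, where r=r and x=x]
    by (simp add: B_def p_def)
  have "m*p = p+1" unfolding p_def using m by (simp add: field_simps)
  then have "(\<lambda>x::'a. (sigmaA m N A x * f) powr m) = (\<lambda>x. f powr m * (A + B*(norm x)\<^sup>2) powr (p+1))"
    by (simp add: radial)
  then show "laplacian (\<lambda>x. (sigmaA m N A x * f) powr m) y
           = f powr m*(p+1)*2*B*(p*U powr (p-1)*(2*B)*(norm y)\<^sup>2 + N*U powr p)"
    using laplacian_radial_power[OF A less_imp_le[OF B], of "f powr m" "p+1" y]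
    by (simp add: U_def B_def N_def)
  have w: "(\<lambda>x::'a. sigmaA m N A x * f) = (\<lambda>x. f * (A + B*(norm x)\<^sup>2) powr p)"
    by (rule ext) (simp add: sigmaA_def B_def p_def)
  then show "y_grad (\<lambda>x. sigmaA m N A x * f) y = f*p*U powr (p-1)*(2*B)*(norm y)\<^sup>2"
    using y_grad_radial_power[OF A less_imp_le[OF B], of f p y] by (simp add: U_def B_def)
  show "sigmaA m N A y * f = f * U powr p"
    by (simp add: sigmaA_def U_def p_def mult.commute)
  show "(sigmaA m N A y * f) powr q = U powr (p*q) * f powr q"
    unfolding radial U_def B_def by (simp only: mult.commute)
qed

lemma Lop_separable:
  fixes m A s :: real and F :: "real \<Rightarrow> real" and y :: "'a::euclidean_space"
  defines "N \<equiv> real DIM('a)"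
  defines "q \<equiv> qexp m N" and "U \<equiv> A + B0 m N * (norm y)\<^sup>2" and "\<gamma> \<equiv> 1 / (2*(1-m))"
  assumes m: "0 < m" "m < 1" "q > 1" and A: "A > 0" and F: "F s > 0"
  shows "Lop m (\<lambda>r x. sigmaA m N A x * F r) s y
     = U powr (1/(m-1) - 1) *
         (B0 m N * (norm y)\<^sup>2 * (2*\<gamma>*(F s powr m - F s))
          + A*((1/(q-1))*F s*(1/s) - (1/(q-1))*(F s powr m - F s)))
       - U powr (1/(m-1)*q) * F s powr q * (1/s)"
proof -
  define B p f a r2 D where "B = B0 m N" and "p = 1/(m-1)" and "f = F s"
    and "a = U powr (p-1)" and "r2 = (norm y)\<^sup>2" and "D = m*N - N + 2"
  have N0: "N > 0" unfolding N_def by simp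
  have qD: "N*(q-1) = D" unfolding q_def qexp_def D_def using N0 by (simp add: field_simps)
  have D0: "D > 0" using qD m(3) N0 by (metis diff_gt_0_iff_gt mult_pos_pos)
  have Bpos: "B > 0" unfolding B_def using B0_pos[OF m(1,2) _ N0] m(3) q_def by blast
  have U0: "U > 0" unfolding U_def using A Bpos B_def by (simp add: add_pos_nonneg)
  have Up: "U powr p = a*U"
    using powr_add[of U "p-1" 1] U0 unfolding a_def by simp
  note terms = separable_profile_terms[where 'a='a and y=y, OF m(2) A Bpos[unfolded B_def N_def] F,
      folded N_def, folded U_def, folded B_def p_def f_def r2_def, folded a_def, unfolded Up]
  have "Lop m (\<lambda>r x. sigmaA m N A x * F r) s y
     = f powr m*(p+1)*2*B*(p*a*(2*B)*r2 + N*(a*U))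
         + (1/(N*(q-1)))*(N*(f*(a*U)) + f*p*a*(2*B)*r2)
         + (1/(q-1))*(1/s)*(f*(a*U) + ((1-m)/2)*(f*p*a*(2*B)*r2))
         - U powr (p*q)*f powr q*(1/s)"
    unfolding Lop_def Let_def N_def[symmetric] q_def[symmetric] f_def[symmetric]
    unfolding terms(1,2) terms(4)[of q] unfolding terms(3)
    by (simp add: field_simps)
  also have "\<dots> = a*(B*r2*(2*\<gamma>*(f powr m-f)) + A*((1/(q-1))*f*(1/s) - (1/(q-1))*(f powr m-f)))
                  - U powr (p*q)*f powr q*(1/s)"
  proof (rule Lop_separable_identity[where D=D and c="1/(N*(q-1))" and h="(1-m)/2"])
    show "B*(2*m*D) = 1-m" unfolding B_def B0_def D_def[symmetric] using m(1) D0 by (simp add: field_simps)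
    show "p*(m-1) = 1" unfolding p_def using m(2) by simp
    show "1/(N*(q-1))*D = 1" using qD D0 by simp
    show "1/(q-1) = 1/(N*(q-1))*N" using N0 by simp
    show "\<gamma>*(2*(1-m)) = 1" unfolding \<gamma>_def using m(2) by simp
  qed (simp_all add: D_def U_def B_def r2_def)
  finally show ?thesis
    by (simp add: a_def B_def p_def f_def r2_def)
qed

section \<open>Case (i): the stationary profile\<close>

text \<open>For \<open>m \<ge> (N-1)/N\<close> the profile \<open>\<sigma>\<^sub>A\<close> itself is a subsolution once \<open>A \<ge> max 1 (q-1)\<close>:
  the absorption term carries the factor \<open>U^(p(q+m-2)) \<le> 1\<close> relative to the linear term.\<close>
lemma stationary_subsolution:
  fixes m A s :: real and y :: "'a::euclidean_space"
  defines "N \<equiv> real DIM('a)"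
  defines "q \<equiv> qexp m N"
  assumes m: "0 < m" "m < 1" "q > 1" and critical: "(N - 1)/N \<le> m"
    and A: "A \<ge> 1" "A \<ge> q - 1" and s: "s > 0"
  shows "dt (\<lambda>r x. sigmaA m N A x) s y - Lop m (\<lambda>r x. sigmaA m N A x) s y \<le> 0"
proof -
  define p U where "p = 1/(m-1)" and "U = A + B0 m N * (norm y)\<^sup>2"
  have N0: "N > 0" unfolding N_def by simp
  have U1: "U \<ge> 1" unfolding U_def using A B0_pos[OF m(1,2) _ N0] m(3) q_def
    by (smt (verit) zero_le_power2 mult_nonneg_nonneg)
  have L: "Lop m (\<lambda>r x. sigmaA m N A x) s y = U powr (p-1) * (A/(q-1)/s) - U powr (p*q)/s"
    using Lop_separable[of m A "\<lambda>r. 1" s y] m A(1) unfolding N_def[symmetric] q_def[symmetric]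
    by (simp add: U_def p_def)
  have dt0: "dt (\<lambda>r x. sigmaA m N A x) s y = 0"
    unfolding dt_def by (rule DERIV_imp_deriv) (rule DERIV_const)
  have "p*(m-1) = 1" unfolding p_def using m(2) by simp
  then have exponent: "p*q = (p-1) + p*(q+m-2)"
    by (simp add: algebra_simps)
  have "p*(q+m-2) \<le> 0"
  proof -
    have "q + m - 2 \<ge> 0"
      using critical N0 unfolding q_def qexp_def by (simp add: field_simps)
    moreover have "p < 0" unfolding p_def using m(2) by simp
    ultimately show ?thesis by (simp add: mult_nonpos_nonneg)
  qed
  then have "U powr (p*(q+m-2)) \<le> 1"
    using U1 powr_mono[of "p*(q+m-2)" 0 U] by simp
  also have "1 \<le> A/(q-1)"
    using A m(3) by simp
  finally have "U powr (p*q) \<le> U powr (p-1) * (A/(q-1))"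
    unfolding exponent powr_add using U1 by (intro mult_left_mono) auto
  then have "U powr (p*q)/s \<le> U powr (p-1) * (A/(q-1)) / s"
    by (rule divide_right_mono) (use s in simp)
  then show ?thesis
    unfolding dt0 L by simp
qed

section \<open>Case (ii): the time-corrected profile\<close>

lemma powr_minus_self_bounds:
  fixes f m :: real
  assumes f: "0 < f" "f \<le> 1" and m: "0 < m" "m < 1"
  shows "f powr m - f \<le> (1-m)*(1-f)" and "f*((1-m)*(1-f)) \<le> f powr m - f"
proof -
  have "f powr m * 1 powr (1-m) \<le> m*f + (1-m)*1"
    by (rule Youngs_inequality_0) (use assms in auto)
  then show "f powr m - f \<le> (1-m)*(1-f)" by (simp add: algebra_simps)
  have young: "f powr (1-m) * 1 powr m \<le> (1-m)*f + m*1"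
    by (rule Youngs_inequality_0) (use assms in auto)
  have "f = f powr m * f powr (1-m)" using f by (simp add: powr_add[symmetric])
  also have "\<dots> \<le> f powr m * ((1-m)*f + m)" using young by (intro mult_left_mono) auto
  finally have h: "f \<le> f powr m * ((1-m)*f + m)" .
  have "(1-m)*f \<le> (1-m)*1" using f m by (intro mult_left_mono) auto
  then have "(1-m)*f + m \<le> 1" by simp
  then have "f \<le> f powr m" using h mult_left_mono[of _ 1 "f powr m"] by fastforce
  then have "f*((1-m)*(1-f)) \<le> f powr m*((1-m)*(1-f))"
    using f m by (intro mult_right_mono) auto
  also have "\<dots> \<le> f powr m - f" using h by (simp add: algebra_simps)
  finally show "f*((1-m)*(1-f)) \<le> f powr m - f" .
qed

lemma dt_time_factor:
  assumes "s \<noteq> 0"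
  shows "deriv (\<lambda>r. c * (1 - g/r)) s = c*(g/s^2)"
  by (rule DERIV_imp_deriv)
     (use assms in \<open>auto intro!: derivative_eq_intros simp: power2_eq_square field_simps\<close>)

text \<open>The scalar inequality behind case (ii), in the variables \<open>a = U^(p-1)\<close>, \<open>t = 1/s\<close>,
  \<open>X = B0|y|^2\<close>, \<open>f = 1 - \<gamma>t\<close>, \<open>fm = f^m\<close>, \<open>fq = f^q\<close>, \<open>Ue = U^(pq-p+1)\<close>. Smallness of \<open>\<gamma>tq\<close> makes the
  coefficient of \<open>X\<close> at most \<open>-(5/8)\<gamma>t\<close> and that of \<open>A\<close> at most \<open>-(3/8)kt\<close>; the absorption term
  \<open>Ue fq t \<le> c1 U t\<close> is then dominated.\<close>
lemma time_corrected_inequality: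
  fixes a t g q k f fm X A U Ue fq c1 :: real
  assumes a: "a > 0" and t: "t > 0" and g: "g \<ge> 1/2" and q: "q > 1" and k: "k = 1/(q-1)"
    and small: "g*t*q \<le> 1/8" and f: "f = 1 - g*t"
    and lo: "f*t/2 \<le> fm - f" and hi: "fm - f \<le> t/2"
    and X: "X \<ge> 0" and A: "A > 0" and U: "U = A + X" and Ue: "0 \<le> Ue" "Ue \<le> c1*U"
    and fq: "fq \<le> 1" and c1: "c1 \<le> 5/16" "c1 \<le> 3*k/8"
  shows "a*U*g*t^2 - (a*(X*(2*g*(fm-f)) + A*(k*f*t - k*(fm-f))) - a*Ue*fq*t) \<le> 0"
proof -
  have k0: "k > 0" using q k by simp
  have gt: "g*t > 0" using g t by simp
  have "g*t*1 \<le> g*t*q" using gt q by (intro mult_left_mono) auto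
  then have "g*t \<le> 1/8" using small by simp
  moreover have "(1/2)*t \<le> g*t" using g t by (intro mult_right_mono) auto
  ultimately have tg: "t*(1+g) \<le> 3/8" by (simp add: algebra_simps)
  define P Q where "P = g*t^2 - 2*g*(fm-f)" and "Q = g*t^2 - k*f*t + k*(fm-f)"
  have P: "P \<le> -(5/8)*g*t"
  proof -
    have "2*g*(f*t/2) \<le> 2*g*(fm-f)" using lo g by (intro mult_left_mono) auto
    then have "P \<le> g*t*(t - f)" unfolding P_def by (simp add: algebra_simps power2_eq_square)
    also have "\<dots> \<le> g*t*(-5/8)" using tg f gt by (intro mult_left_mono) (auto simp: algebra_simps)
    finally show ?thesis by simp
  qed
  have Q: "Q \<le> -(3/8)*k*t"
  proof -
    have "k*(fm-f) \<le> k*(t/2)" using hi k0 by (intro mult_left_mono) auto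
    then have "Q \<le> t*(g*t*(1+k) - k/2)" unfolding Q_def f by (simp add: algebra_simps power2_eq_square)
    also have "\<dots> \<le> t*(k/8 - k/2)"
    proof -
      have "1 + k = q*k" using k q by (simp add: field_simps)
      then have "g*t*(1+k) = (g*t*q)*k" by simp
      also have "\<dots> \<le> (1/8)*k" using small k0 by (intro mult_right_mono) auto
      finally show ?thesis using t by (intro mult_left_mono) auto
    qed
    finally show ?thesis by (simp add: algebra_simps)
  qed
  have split: "a*U*g*t^2 - (a*(X*(2*g*(fm-f)) + A*(k*f*t - k*(fm-f))) - a*Ue*fq*t)
             = a*(X*P + A*Q + Ue*fq*t)"
    unfolding P_def Q_def U by (simp add: algebra_simps)
  have "X*P \<le> X*(-(5/8)*g*t)" using P X by (intro mult_left_mono) auto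
  moreover have "A*Q \<le> A*(-(3/8)*k*t)" using Q A by (intro mult_left_mono) auto
  moreover have "Ue*fq*t \<le> c1*U*t"
  proof -
    have "Ue*fq \<le> Ue" using Ue fq by (simp add: mult_left_le)
    then show ?thesis using Ue t by (intro mult_right_mono) auto
  qed
  moreover have "t*(c1*X + c1*A - (5/8*g)*X - (3*k/8)*A) \<le> 0"
  proof -
    have "c1*X \<le> (5/8*g)*X" using c1(1) g X by (intro mult_right_mono) auto
    moreover have "c1*A \<le> (3*k/8)*A" using c1(2) A by (intro mult_right_mono) auto
    ultimately have "c1*X + c1*A - (5/8*g)*X - (3*k/8)*A \<le> 0" by linarith
    then show ?thesis using t by (intro mult_nonneg_nonpos) auto
  qed
  ultimately have "X*P + A*Q + Ue*fq*t \<le> 0"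
    unfolding U by (simp add: algebra_simps)
  then show ?thesis
    unfolding split using a by (simp add: mult_nonneg_nonpos)
qed

lemma time_corrected_subsolution:
  fixes m A s :: real and y :: "'a::euclidean_space"
  defines "N \<equiv> real DIM('a)"
  defines "q \<equiv> qexp m N" and "\<gamma> \<equiv> 1 / (2*(1-m))"
  assumes m: "0 < m" "m < 1" "q > 1" and A: "A > 0"
    and A_large: "A powr ((q-1)/(m-1)) \<le> min (5/16) (3/(8*(q-1)))"
    and s: "4*q/(1-m) < s"
  shows "dt (\<lambda>r x. sigmaA m N A x * (1 - \<gamma>/r)) s y
       - Lop m (\<lambda>r x. sigmaA m N A x * (1 - \<gamma>/r)) s y \<le> 0"
proof -
  define p t f U X where "p = 1/(m-1)" and "t = 1/s" and "f = 1 - \<gamma>/s"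
    and "U = A + B0 m N * (norm y)\<^sup>2" and "X = B0 m N * (norm y)\<^sup>2"
  have N0: "N > 0" unfolding N_def by simp
  have X0: "X \<ge> 0" unfolding X_def using B0_pos[OF m(1,2) _ N0] m(3) q_def by simp
  have U0: "U > 0" and UA: "A \<le> U" unfolding U_def using X0 A X_def by auto
  have s0: "s > 0" using s m by (smt (verit) divide_pos_pos)
  have t0: "t > 0" unfolding t_def using s0 by simp
  have g: "\<gamma> \<ge> 1/2" unfolding \<gamma>_def using m by (simp add: field_simps)
  have small: "\<gamma>*t*q \<le> 1/8"
    using s m(2) s0 unfolding \<gamma>_def t_def by (simp add: field_simps)
  have ft: "f = 1 - \<gamma>*t" unfolding f_def t_def by simp
  have "\<gamma>*t*1 \<le> \<gamma>*t*q" using g t0 m(3) by (intro mult_left_mono) auto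
  then have "\<gamma>*t < 1" using small by simp
  then have f: "0 < f" "f \<le> 1" using ft g t0 by auto
  have gap: "(1-m)*(1-f) = t/2" unfolding ft \<gamma>_def using m(2) by (simp add: field_simps)
  have absorption: "U powr (p*q - (p-1)) \<le> min (5/16) (3/(8*(q-1))) * U"
  proof -
    have "p*q - (p-1) = p*(q-1) + 1" by (simp add: algebra_simps)
    then have e: "p*q - (p-1) = (q-1)/(m-1) + 1" unfolding p_def by simp
    have "U powr ((q-1)/(m-1)) \<le> A powr ((q-1)/(m-1))"
      using UA A m divide_nonneg_neg[of "q-1" "m-1"] by (intro powr_mono2') auto
    then show ?thesis
      unfolding e powr_add using U0 A_large by (simp add: mult_right_mono)
  qed
  have L: "Lop m (\<lambda>r x. sigmaA m N A x * (1 - \<gamma>/r)) s y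
      = U powr (p-1) * (X*(2*\<gamma>*(f powr m - f)) + A*((1/(q-1))*f*t - (1/(q-1))*(f powr m - f)))
        - U powr (p-1) * U powr (p*q - (p-1)) * f powr q * t"
    using Lop_separable[of m A "\<lambda>r. 1 - \<gamma>/r" s y] m A f(1)
    unfolding N_def[symmetric] q_def[symmetric] \<gamma>_def[symmetric]
    by (simp add: U_def X_def p_def f_def t_def powr_add[symmetric] mult.assoc)
  have sigma: "sigmaA m N A y = U powr (p-1) * U"
    using powr_add[of U "p-1" 1] U0 by (simp add: sigmaA_def U_def p_def)
  have dt: "dt (\<lambda>r x. sigmaA m N A x * (1 - \<gamma>/r)) s y = U powr (p-1) * U * \<gamma> * t^2"
    unfolding dt_def dt_time_factor[of s, OF less_imp_neq[OF s0, symmetric]] sigma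
    by (simp add: t_def power2_eq_square)
  show ?thesis
    unfolding dt L
  proof (rule time_corrected_inequality[OF _ t0 g m(3) refl small ft])
    show "f*t/2 \<le> f powr m - f" "f powr m - f \<le> t/2"
      using powr_minus_self_bounds[OF f m(1,2)] gap by (auto simp: mult.assoc)
    show "f powr q \<le> 1" using f m(3) by (auto intro: powr_le1)
    show "min (5/16) (3/(8*(q-1))) \<le> 3*(1/(q-1))/8" by (rule min.coboundedI2) (simp add: mult.commute)
  qed (use U0 X0 A absorption in \<open>auto simp: U_def X_def\<close>)
qed

lemma fast_diffusion_range:
  assumes "N > 0" "max 0 (N - 2) / N < m"
  shows "0 < m" and "qexp m N > 1"
proof -
  show "0 < m" using assms by (smt (verit) divide_nonneg_pos)
  have "(N - 2)/N < m" using assms by (smt (verit) divide_right_mono)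
  then show "qexp m N > 1" unfolding qexp_def using assms(1) by (simp add: field_simps)
qed

lemma powr_negative_below:
  fixes A c e :: real
  assumes "c > 0" "e < 0" "c powr (1/e) \<le> A"
  shows "A powr e \<le> c"
proof -
  have "A powr e \<le> (c powr (1/e)) powr e" using assms by (intro powr_mono2') auto
  also have "\<dots> = c" using assms by (simp add: powr_powr)
  finally show ?thesis .
qed

theorem lemma3p1:
  fixes m :: real
  defines "N \<equiv> real DIM('a::euclidean_space)"
  assumes "max 0 (N - 2) / N < m" and "m < 1"
  shows "\<exists>Asub>0.
     ((N - 1) / N \<le> m \<longrightarrow>
        (\<forall>A\<ge>Asub. \<forall>s>0. \<forall>y::'a.
           (let w = (\<lambda>(r::real) (x::'a). sigmaA m N A x) in dt w s y - Lop m w s y \<le> 0)))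
   \<and> (m < (N - 1) / N \<longrightarrow>
        (\<forall>A\<ge>Asub. \<forall>s. \<forall>y::'a.
           (let q = qexp m N; \<gamma> = 1 / (2 * (1 - m));
                s0 = max (4 * q / (1 - m)) (2 powr (m + 2) * q / (q - 1));
                w = (\<lambda>(r::real) (x::'a). sigmaA m N A x * (1 - \<gamma> / r))
            in s0 < s \<longrightarrow> dt w s y - Lop m w s y \<le> 0)))"
proof -
  define q e c where "q = qexp m N" and "e = (q-1)/(m-1)" and "c = min (5/16) (3/(8*(q-1)))"
  have N0: "N > 0" unfolding N_def by simp
  note m0 = fast_diffusion_range(1)[OF N0 assms(2)]
  have q1: "q > 1" unfolding q_def using fast_diffusion_range(2)[OF N0 assms(2)] .
  define Asub where "Asub = max (max 1 (q-1)) (c powr (1/e))"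
  have large: "A powr e \<le> c" if "A \<ge> Asub" for A
  proof (rule powr_negative_below)
    show "c > 0" unfolding c_def using q1 by simp
    show "e < 0" unfolding e_def using q1 assms(3) by (simp add: divide_pos_neg)
    show "c powr (1/e) \<le> A" using that unfolding Asub_def by simp
  qed
  show ?thesis
  proof (intro exI[of _ Asub] conjI impI allI)
    show "Asub > 0" unfolding Asub_def by simp
  next
    fix A s :: real and y :: 'a
    assume "(N - 1)/N \<le> m" "A \<ge> Asub" "s > 0"
    then show "let w = \<lambda>r x. sigmaA m N A x in dt w s y - Lop m w s y \<le> 0"
      using stationary_subsolution[of m A s y] m0 assms(3) q1
      unfolding Let_def N_def[symmetric] q_def[symmetric] Asub_def by simp
  next
    fix A s :: real and y :: 'a
    assume "A \<ge> Asub"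
    then show "let q = qexp m N; \<gamma> = 1 / (2 * (1 - m));
                s0 = max (4 * q / (1 - m)) (2 powr (m + 2) * q / (q - 1));
                w = \<lambda>r x. sigmaA m N A x * (1 - \<gamma> / r)
            in s0 < s \<longrightarrow> dt w s y - Lop m w s y \<le> 0"
      using time_corrected_subsolution[of m A s y] large m0 assms(3) q1
      unfolding Let_def N_def[symmetric] q_def[symmetric] e_def c_def Asub_def by simp
  qed
qed

end
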